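(* Let $r:\tilde Q\to\mathbb R$ be a function such that equation (E-IV)(a) holds at every $(K,L,M)\in\tilde Q$ with $K+M<0$ and $L+M<0$. If $r>0$ at all points of $\tilde Q$ lying in the plane $K+M=0$ or in the plane $L+M=0$, then $r>0$ on all of $\tilde Q$.
   Context: $\tilde Q=\{(K,L,M)\in\mathbb Z^3: L+M\le0,\ K+M\le0,\ K+L\ge0\}$. Fix $\alpha_1,\alpha_2,\alpha_3>0$ with $\alpha_1+\alpha_2+\alpha_3=\pi$. Equation (E-IV)(a) at $(K,L,M)$: with $r=r(K,L,M)$, $r_1=r(K,L+1,M)$, $r_2=r(K,L,M+1)$, $r_3=r(K+1,L,M)$, $r(r_1\sin\alpha_3+r_2\sin\alpha_1+r_3\sin\alpha_2)=r_1r_2\sin\alpha_2+r_2r_3\sin\alpha_3+r_3r_1\sin\alpha_1$. *)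

theory Defs
  imports Complex_Main
begin

definition Qt :: "(int \<times> int \<times> int) set" where
  "Qt = {(K, L, M). L + M \<le> 0 \<and> K + M \<le> 0 \<and> K + L \<ge> 0}"

definition EIVa :: "real \<Rightarrow> real \<Rightarrow> real \<Rightarrow> (int \<times> int \<times> int \<Rightarrow> real) \<Rightarrow> int \<Rightarrow> int \<Rightarrow> int \<Rightarrow> bool" where
  "EIVa a1 a2 a3 r K L M \<longleftrightarrow>
     (let r0 = r (K, L, M); r1 = r (K, L + 1, M); r2 = r (K, L, M + 1); r3 = r (K + 1, L, M)
      in r0 * (r1 * sin a3 + r2 * sin a1 + r3 * sin a2)
         = r1 * r2 * sin a2 + r2 * r3 * sin a3 + r3 * r1 * sin a1)"

end

theory Submission
  imports Defs
begin

text \<open>Positivity propagates inwards from the two boundary planes: at an interior point,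
  (E-IV)(a) expresses r(K,L,M) as the quotient of a positive combination of products of the
  three neighbouring values by a positive linear combination of them, and every neighbour is
  strictly closer to the boundary as measured by -(K+M)-(L+M), which vanishes exactly there.\<close>

lemma Qt_induct [consumes 1, case_names boundary interior]:
  assumes "p \<in> Qt"
    and boundary: "\<And>K L M. (K, L, M) \<in> Qt \<Longrightarrow> K + M = 0 \<or> L + M = 0 \<Longrightarrow> P (K, L, M)"
    and interior: "\<And>K L M. (K, L, M) \<in> Qt \<Longrightarrow> K + M < 0 \<Longrightarrow> L + M < 0 \<Longrightarrow>
      P (K, L + 1, M) \<Longrightarrow> P (K, L, M + 1) \<Longrightarrow> P (K + 1, L, M) \<Longrightarrow> P (K, L, M)"
  shows "P p"
proof -
  have "P (K, L, M)" if "(K, L, M) \<in> Qt" and "nat (- (K + M) - (L + M)) = n" for K L M n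
    using that
  proof (induction n arbitrary: K L M rule: less_induct)
    case (less n)
    show ?case
    proof (cases "K + M = 0 \<or> L + M = 0")
      case True
      with less.prems(1) show ?thesis by (rule boundary)
    next
      case False
      with less.prems(1) have "K + M < 0" "L + M < 0"
        by (auto simp: Qt_def)
      moreover have "P (K, L + 1, M)" "P (K, L, M + 1)" "P (K + 1, L, M)"
        using less.prems calculation by (auto intro!: less.IH simp: Qt_def)
      ultimately show ?thesis
        by (rule interior[OF less.prems(1)])
    qed
  qed
  with \<open>p \<in> Qt\<close> show ?thesis
    by (cases p) auto
qed

lemma EIVa_pos:
  assumes "sin a1 > 0" and "sin a2 > 0" and "sin a3 > 0"
    and "r (K, L + 1, M) > 0" and "r (K, L, M + 1) > 0" and "r (K + 1, L, M) > 0"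
    and "EIVa a1 a2 a3 r K L M"
  shows "r (K, L, M) > 0"
proof -
  let ?r1 = "r (K, L + 1, M)" and ?r2 = "r (K, L, M + 1)" and ?r3 = "r (K + 1, L, M)"
  have lin_pos: "?r1 * sin a3 + ?r2 * sin a1 + ?r3 * sin a2 > 0"
    using assms by (intro add_pos_pos mult_pos_pos)
  have "r (K, L, M) * (?r1 * sin a3 + ?r2 * sin a1 + ?r3 * sin a2)
      = ?r1 * ?r2 * sin a2 + ?r2 * ?r3 * sin a3 + ?r3 * ?r1 * sin a1"
    using assms(7) by (simp add: EIVa_def Let_def)
  also have "\<dots> > 0"
    using assms by (intro add_pos_pos mult_pos_pos)
  finally show ?thesis
    using lin_pos zero_less_mult_pos2 by blast
qed

theorem lemma3:
  fixes a1 a2 a3 :: real and r :: "int \<times> int \<times> int \<Rightarrow> real"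
  assumes "a1 > 0" and "a2 > 0" and "a3 > 0" and "a1 + a2 + a3 = pi"
    and "\<And>K L M. (K, L, M) \<in> Qt \<Longrightarrow> K + M < 0 \<Longrightarrow> L + M < 0 \<Longrightarrow> EIVa a1 a2 a3 r K L M"
    and "\<And>K L M. (K, L, M) \<in> Qt \<Longrightarrow> K + M = 0 \<or> L + M = 0 \<Longrightarrow> r (K, L, M) > 0"
  shows "\<forall>p \<in> Qt. r p > 0"
proof
  have sin_pos: "sin a1 > 0" "sin a2 > 0" "sin a3 > 0"
    using assms(1-4) by (auto intro: sin_gt_zero)
  fix p
  assume "p \<in> Qt"
  then show "r p > 0"
  proof (induction rule: Qt_induct)
    case (boundary K L M)
    then show ?case by (rule assms(6))
  next
    case (interior K L M)
    show ?case
      by (rule EIVa_pos[OF sin_pos]) (use interior assms(5) in auto)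
  qed
qed

end
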